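(* Let $I=[r,s]$ and let $C$ be an $I$-vertex-stable strongly connected component with $|C|\ge 2$ and $D(C)<\infty$. Let $x$ be the maximal round in $[r,s]$ with $x+D^x(C)-1\le s$. Then (i) for every $x'\in[r,x]$ it holds that $x'+D^{x'}(C)-1\le s$ and $D^{x'}(C)\le D(C)$; and (ii) $x\ge\max\{s-|C|+2,\,r\}$.
   Context: A finite set $\Pi$ of $n\ge2$ processes is given together with an infinite sequence of simple directed graphs $\mathcal{G}^1,\mathcal{G}^2,\dots$ on vertex set $\Pi$ ($\mathcal{G}^t$ is the round-$t$ communication graph). Process $p$ causally influences $q$ in round $t$ if $q=p$ or $(p\to q)\in\mathcal{G}^t$. A causal chain of length $k\ge1$ from $p$ in round $t$ to $q$ is a sequence $p=p_0,\dots,p_k=q$ with $p_i$ causally influencing $p_{i+1}$ in round $t+i$ for $0\le i<k$; the causal distance $d_t(p,q)$ is the minimum length of such a chain ($\infty$ if none). For an interval $I=[r,s]$, a set $C\subseteq\Pi$ is an $I$-vertex-stable strongly connected component if for every $p\in C$ and every round $t\in I$, the vertex set of the strongly connected component of $\mathcal{G}^t$ containing $p$ equals $C$. Its round-$x$ causal diameter is $D^x(C)=\max_{p,q\in C} d_x(p,q)$, and its causal diameter is $D(C)=\max\{D^x(C): x\in[r,s],\ x+D^x(C)-1\le s\}$ if this set is nonempty, and $D(C)=\infty$ otherwise. *)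

theory Defs
  imports Main "HOL-Library.Extended_Nat"
begin

text \<open>Processes form a finite type 'p (the set \<Pi> = UNIV). A communication pattern is
  a sequence G :: nat \<Rightarrow> ('p \<times> 'p) set; G t is the edge set of round t (t \<ge> 1).\<close>

definition influences :: "(nat \<Rightarrow> ('p \<times> 'p) set) \<Rightarrow> nat \<Rightarrow> 'p \<Rightarrow> 'p \<Rightarrow> bool" where
  "influences G t p q \<longleftrightarrow> q = p \<or> (p, q) \<in> G t"

definition causal_chain :: "(nat \<Rightarrow> ('p \<times> 'p) set) \<Rightarrow> nat \<Rightarrow> 'p \<Rightarrow> 'p \<Rightarrow> nat \<Rightarrow> bool" where
  "causal_chain G t p q k \<longleftrightarrow> k \<ge> 1 \<and>
     (\<exists>ps :: nat \<Rightarrow> 'p. ps 0 = p \<and> ps k = q \<and>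
        (\<forall>i<k. influences G (t + i) (ps i) (ps (Suc i))))"

definition causal_dist :: "(nat \<Rightarrow> ('p \<times> 'p) set) \<Rightarrow> nat \<Rightarrow> 'p \<Rightarrow> 'p \<Rightarrow> enat" where
  "causal_dist G t p q =
     (if \<exists>k. causal_chain G t p q k then enat (LEAST k. causal_chain G t p q k) else \<infinity>)"

definition scc_of :: "('p \<times> 'p) set \<Rightarrow> 'p \<Rightarrow> 'p set" where
  "scc_of E p = {q. (p, q) \<in> E\<^sup>* \<and> (q, p) \<in> E\<^sup>*}"

definition vertex_stable_scc :: "(nat \<Rightarrow> ('p \<times> 'p) set) \<Rightarrow> nat \<Rightarrow> nat \<Rightarrow> 'p set \<Rightarrow> bool" where
  "vertex_stable_scc G r s C \<longleftrightarrow> (\<forall>p\<in>C. \<forall>t\<in>{r..s}. scc_of (G t) p = C)"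

definition causal_diam_at :: "(nat \<Rightarrow> ('p \<times> 'p) set) \<Rightarrow> nat \<Rightarrow> 'p set \<Rightarrow> enat" where
  "causal_diam_at G x C = Sup {causal_dist G x p q | p q. p \<in> C \<and> q \<in> C}"

text \<open>Admissibility condition x + D^x(C) - 1 \<le> s (in enat; \<infinity> - 1 = \<infinity>).\<close>
definition admissible :: "(nat \<Rightarrow> ('p \<times> 'p) set) \<Rightarrow> nat \<Rightarrow> 'p set \<Rightarrow> nat \<Rightarrow> bool" where
  "admissible G s C x \<longleftrightarrow> enat x + causal_diam_at G x C - 1 \<le> enat s"

definition causal_diam :: "(nat \<Rightarrow> ('p \<times> 'p) set) \<Rightarrow> nat \<Rightarrow> nat \<Rightarrow> 'p set \<Rightarrow> enat" where
  "causal_diam G r s C =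
     (let A = {causal_diam_at G x C | x. x \<in> {r..s} \<and> admissible G s C x}
      in if A \<noteq> {} then Max A else \<infinity>)"

end

theory Submission
  imports Defs
begin

text \<open>Waiting is always allowed (every process influences itself), so a causal chain
  starting in a later round can be prefixed by idle steps; hence D^y(C) \<le> (z - y) + D^z(C)
  for y \<le> z, and admissibility is inherited by all earlier rounds. Conversely, in every
  round of the stability interval the component is strongly connected, so the set of members
  of C causally influenced by p grows by at least one process per round until it is all of C;
  thus D^y(C) \<le> |C| - 1 as long as the interval lasts, which makes every round
  y \<le> s - |C| + 2 admissible and bounds the maximal admissible round from below.\<close>

definition causal_reach :: "(nat \<Rightarrow> ('p \<times> 'p) set) \<Rightarrow> nat \<Rightarrow> 'p \<Rightarrow> nat \<Rightarrow> 'p set" where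
  "causal_reach G t p k =
     {q. \<exists>ps. ps 0 = p \<and> ps k = q \<and> (\<forall>i<k. influences G (t + i) (ps i) (ps (Suc i)))}"

lemma causal_reach_0 [simp]: "causal_reach G t p 0 = {p}"
  by (auto simp: causal_reach_def)

lemma causal_reach_Suc:
  "b \<in> causal_reach G t p (Suc k) \<longleftrightarrow> (\<exists>a \<in> causal_reach G t p k. influences G (t + k) a b)"
proof
  assume "b \<in> causal_reach G t p (Suc k)"
  then obtain ps where "ps 0 = p" "ps (Suc k) = b"
    and "\<forall>i<Suc k. influences G (t + i) (ps i) (ps (Suc i))"
    unfolding causal_reach_def by blast
  then have "ps k \<in> causal_reach G t p k" "influences G (t + k) (ps k) b"
    unfolding causal_reach_def by auto
  then show "\<exists>a \<in> causal_reach G t p k. influences G (t + k) a b" by blast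
next
  assume "\<exists>a \<in> causal_reach G t p k. influences G (t + k) a b"
  then obtain a ps where ab: "influences G (t + k) a b"
    and ps: "ps 0 = p" "ps k = a" "\<forall>i<k. influences G (t + i) (ps i) (ps (Suc i))"
    unfolding causal_reach_def by blast
  have "\<forall>i<Suc k. influences G (t + i) ((ps(Suc k := b)) i) ((ps(Suc k := b)) (Suc i))"
    using ps ab by (auto simp: less_Suc_eq)
  with ps show "b \<in> causal_reach G t p (Suc k)"
    unfolding causal_reach_def by (intro CollectI exI[of _ "ps(Suc k := b)"]) auto
qed

lemma causal_reach_mono_Suc: "causal_reach G t p k \<subseteq> causal_reach G t p (Suc k)"
  by (auto simp: causal_reach_Suc influences_def)

lemma self_in_causal_reach [simp]: "p \<in> causal_reach G t p k"
  by (induction k) (auto intro: subsetD[OF causal_reach_mono_Suc])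

lemma causal_reach_trans:
  assumes "q \<in> causal_reach G t p d"
  shows "u \<in> causal_reach G (t + d) q k \<Longrightarrow> u \<in> causal_reach G t p (d + k)"
proof (induction k arbitrary: u)
  case 0
  then show ?case using assms by simp
next
  case (Suc k)
  then obtain a where "a \<in> causal_reach G (t + d) q k" "influences G (t + d + k) a u"
    by (auto simp: causal_reach_Suc)
  with Suc.IH show ?case
    by (auto simp: causal_reach_Suc add.assoc)
qed

lemma causal_chain_iff_reach: "causal_chain G t p q k \<longleftrightarrow> 1 \<le> k \<and> q \<in> causal_reach G t p k"
  by (auto simp: causal_chain_def causal_reach_def)

lemma causal_dist_le_reach:
  assumes "1 \<le> k" "q \<in> causal_reach G t p k"
  shows "causal_dist G t p q \<le> enat k"
  using assms by (auto simp: causal_dist_def causal_chain_iff_reach intro: Least_le)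

lemma enat_diff_one_mono: "a \<le> b \<Longrightarrow> a - 1 \<le> b - (1::enat)"
  by (cases a; cases b) (auto simp: one_enat_def)

lemma causal_dist_delay:
  assumes "y \<le> z"
  shows "causal_dist G y p q \<le> enat (z - y) + causal_dist G z p q"
proof (cases "\<exists>k. causal_chain G z p q k")
  case False
  then show ?thesis by (simp add: causal_dist_def)
next
  case True
  define k where "k = (LEAST k. causal_chain G z p q k)"
  have "causal_chain G z p q k"
    unfolding k_def using True by (rule LeastI_ex)
  then have k: "1 \<le> k" "q \<in> causal_reach G (y + (z - y)) p k"
    using assms by (auto simp: causal_chain_iff_reach)
  have "q \<in> causal_reach G y p (z - y + k)"
    using causal_reach_trans[OF self_in_causal_reach k(2)] .
  then have "causal_dist G y p q \<le> enat (z - y + k)"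
    using k(1) by (intro causal_dist_le_reach) auto
  moreover have "causal_dist G z p q = enat k"
    using True by (simp add: causal_dist_def k_def)
  ultimately show ?thesis by simp
qed

lemma causal_diam_at_delay:
  assumes "y \<le> z"
  shows "causal_diam_at G y C \<le> enat (z - y) + causal_diam_at G z C"
  unfolding causal_diam_at_def
proof (rule Sup_least)
  fix u assume "u \<in> {causal_dist G y p q |p q. p \<in> C \<and> q \<in> C}"
  then obtain p q where u: "u = causal_dist G y p q" "p \<in> C" "q \<in> C" by blast
  have "u \<le> enat (z - y) + causal_dist G z p q"
    unfolding u(1) by (rule causal_dist_delay[OF assms])
  also have "\<dots> \<le> enat (z - y) + Sup {causal_dist G z p q |p q. p \<in> C \<and> q \<in> C}"
    using u by (intro add_left_mono Sup_upper) blast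
  finally show "u \<le> enat (z - y) + Sup {causal_dist G z p q |p q. p \<in> C \<and> q \<in> C}" .
qed

lemma admissible_antimono:
  assumes "y \<le> z" "admissible G s C z"
  shows "admissible G s C y"
proof -
  have "enat y + causal_diam_at G y C \<le> enat y + (enat (z - y) + causal_diam_at G z C)"
    using causal_diam_at_delay[OF assms(1)] by (rule add_left_mono)
  also have "\<dots> = enat z + causal_diam_at G z C"
    using assms(1) by (simp add: add.assoc[symmetric])
  finally have "enat y + causal_diam_at G y C - 1 \<le> enat z + causal_diam_at G z C - 1"
    by (rule enat_diff_one_mono)
  then show ?thesis using assms(2)
    unfolding admissible_def by (rule order_trans)
qed

lemma scc_exists_edge_leaving:
  assumes scc: "\<And>p. p \<in> C \<Longrightarrow> scc_of E p = C"
    and S: "S \<subseteq> C" "p \<in> S" and q: "q \<in> C" "q \<notin> S"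
  shows "\<exists>a b. a \<in> S \<and> b \<in> C - S \<and> (a, b) \<in> E"
proof -
  have pC: "p \<in> C" using S by blast
  have "(p, q) \<in> E\<^sup>*" using scc[OF pC] q unfolding scc_of_def by blast
  then show ?thesis using q
  proof (induction rule: rtrancl_induct)
    case base
    then show ?case using S by blast
  next
    case (step u v)
    have "(v, p) \<in> E\<^sup>*" using scc[OF pC] step.prems unfolding scc_of_def by blast
    then have "(u, p) \<in> E\<^sup>*" using step.hyps(2) by (meson converse_rtrancl_into_rtrancl)
    then have "u \<in> C" using scc[OF pC] step.hyps(1) unfolding scc_of_def by blast
    then show ?case using step by (cases "u \<in> S") blast+
  qed
qed

lemma card_causal_reach_inter_ge:
  fixes C :: "'p::finite set"
  assumes stable: "vertex_stable_scc G r s C" and p: "p \<in> C" and "r \<le> t"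
  shows "t + k \<le> s + 1 \<Longrightarrow> min (k + 1) (card C) \<le> card (causal_reach G t p k \<inter> C)"
proof (induction k)
  case 0
  then show ?case using p by simp
next
  case (Suc k)
  let ?R = "\<lambda>k. causal_reach G t p k \<inter> C"
  have grow: "?R k \<subseteq> ?R (Suc k)" using causal_reach_mono_Suc[of G t p k] by blast
  show ?case
  proof (cases "C \<subseteq> ?R k")
    case True
    then have "card C \<le> card (?R (Suc k))"
      using grow by (intro card_mono) auto
    then show ?thesis by simp
  next
    case False
    then obtain q where q: "q \<in> C" "q \<notin> ?R k" by blast
    have "\<And>p. p \<in> C \<Longrightarrow> scc_of (G (t + k)) p = C"
      using stable Suc.prems \<open>r \<le> t\<close> unfolding vertex_stable_scc_def by auto
    moreover have "p \<in> ?R k" using p by simp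
    ultimately obtain a b where ab: "a \<in> ?R k" "b \<in> C - ?R k" "(a, b) \<in> G (t + k)"
      using scc_exists_edge_leaving[OF _ Int_lower2 _ q] by blast
    then have "insert b (?R k) \<subseteq> ?R (Suc k)"
      using grow by (auto simp: causal_reach_Suc influences_def)
    then have "card (insert b (?R k)) \<le> card (?R (Suc k))" by (simp add: card_mono)
    moreover have "card (insert b (?R k)) = Suc (card (?R k))" using ab(2) by (simp del: Int_iff)
    ultimately show ?thesis using Suc by simp
  qed
qed

lemma causal_diam_at_le_card:
  fixes C :: "'p::finite set"
  assumes stable: "vertex_stable_scc G r s C" and "r \<le> t" and C2: "2 \<le> card C"
    and window: "t + card C \<le> s + 2"
  shows "causal_diam_at G t C \<le> enat (card C - 1)"
  unfolding causal_diam_at_def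
proof (rule Sup_least, clarify)
  fix p q assume pq: "p \<in> C" "q \<in> C"
  let ?k = "card C - 1"
  have "card C \<le> card (causal_reach G t p ?k \<inter> C)"
    using card_causal_reach_inter_ge[OF stable pq(1) \<open>r \<le> t\<close>, of ?k] window C2 by simp
  then have "causal_reach G t p ?k \<inter> C = C"
    by (intro card_seteq) auto
  then show "causal_dist G t p q \<le> enat ?k"
    using pq C2 by (intro causal_dist_le_reach) auto
qed

lemma admissible_if_stable_window:
  fixes C :: "'p::finite set"
  assumes "vertex_stable_scc G r s C" "r \<le> t" "2 \<le> card C" "t + card C \<le> s + 2"
  shows "admissible G s C t"
proof -
  have "enat t + causal_diam_at G t C - 1 \<le> enat t + enat (card C - 1) - 1"
    using causal_diam_at_le_card[OF assms] by (intro enat_diff_one_mono add_left_mono)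
  also have "\<dots> \<le> enat s"
    using assms(3,4) by (simp add: one_enat_def)
  finally show ?thesis unfolding admissible_def .
qed

lemma causal_diam_at_le_causal_diam:
  assumes "t \<in> {r..s}" "admissible G s C t"
  shows "causal_diam_at G t C \<le> causal_diam G r s C"
proof -
  define A where "A = {causal_diam_at G x C | x. x \<in> {r..s} \<and> admissible G s C x}"
  have mem: "causal_diam_at G t C \<in> A"
    using assms by (auto simp: A_def)
  have "finite A"
    by (rule finite_subset[of _ "(\<lambda>x. causal_diam_at G x C) ` {r..s}"]) (auto simp: A_def)
  moreover have "causal_diam G r s C = Max A"
    using mem unfolding causal_diam_def A_def[symmetric] Let_def by auto
  ultimately show ?thesis
    using mem by simp
qed

theorem lemma3:
  fixes G :: "nat \<Rightarrow> ('p::finite \<times> 'p) set" and r s x :: nat and C :: "'p set"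
  assumes n2: "card (UNIV :: 'p set) \<ge> 2"
    and simple: "\<And>t p. (p, p) \<notin> G t"
    and r1: "1 \<le> r"
    and stable: "vertex_stable_scc G r s C"
    and Cge2: "card C \<ge> 2"
    and Dfin: "causal_diam G r s C < \<infinity>"
    and x_in: "x \<in> {r..s}"
    and x_adm: "admissible G s C x"
    and x_max: "\<And>y. y \<in> {r..s} \<Longrightarrow> admissible G s C y \<Longrightarrow> y \<le> x"
  shows "(\<forall>x'\<in>{r..x}. admissible G s C x' \<and> causal_diam_at G x' C \<le> causal_diam G r s C)
         \<and> int x \<ge> max (int s - int (card C) + 2) (int r)"
proof
  show "\<forall>x'\<in>{r..x}. admissible G s C x' \<and> causal_diam_at G x' C \<le> causal_diam G r s C"
  proof
    fix x' assume x': "x' \<in> {r..x}"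
    then have "admissible G s C x'"
      using admissible_antimono x_adm by auto
    moreover have "x' \<in> {r..s}" using x' x_in by auto
    ultimately show "admissible G s C x' \<and> causal_diam_at G x' C \<le> causal_diam G r s C"
      by (simp add: causal_diam_at_le_causal_diam)
  qed
  show "int x \<ge> max (int s - int (card C) + 2) (int r)"
  proof (rule ccontr)
    assume "\<not> ?thesis"
    then have window: "x + 1 + card C \<le> s + 2" using x_in by auto
    then have "admissible G s C (x + 1)"
      using admissible_if_stable_window[OF stable _ Cge2] x_in by simp
    moreover have "x + 1 \<in> {r..s}" using x_in window Cge2 by simp
    ultimately show False using x_max by fastforce
  qed
qed

end
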